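(* Let $(\mathfrak g_0,\mathfrak q)$ be a parabolic $CR$ algebra and $(\vartheta,\mathfrak h_0)$ an adapted Cartan pair, with root system $\mathcal R$ and parabolic set $\mathcal Q$ of $\mathfrak q$. For a fit Weyl chamber $C$, with order $\prec$, basis $\mathcal B$ and $\Phi=\mathcal Q^n\cap\mathcal B$, the following two conditions are equivalent: (a) if $\alpha\in\mathcal R_{\rm cpx}$, $\alpha\succ0$ and $\bar\alpha\prec0$, then $\alpha$ and $-\bar\alpha$ both belong to $\mathcal Q^n$; (b) $\bar\alpha\succ0$ for all $\alpha\in\mathcal B\setminus(\Phi\cup\mathcal R_{\rm im})$. Likewise the following are equivalent: (c) if $\alpha\in\mathcal R_{\rm cpx}$, $\alpha\succ0$ and $\bar\alpha\succ0$, then $\alpha$ and $\bar\alpha$ both belong to $\mathcal Q^n$; (d) $\bar\alpha\prec0$ for all $\alpha\in\mathcal B\setminus(\Phi\cup\mathcal R_{\rm re})$. Moreover there exists a fit Weyl chamber $C'$ satisfying (a) and (b), and there exists a fit Weyl chamber $C''$ satisfying (c) and (d).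
   Context: $\mathfrak g_0$ is a real semisimple Lie algebra with complexification $\mathfrak g$; $Z\mapsto\bar Z$ conjugation w.r.t. $\mathfrak g_0$; $\mathfrak q$ a complex parabolic subalgebra of $\mathfrak g$. An adapted Cartan pair is a Cartan involution $\vartheta$ of $\mathfrak g_0$ with a $\vartheta$-invariant Cartan subalgebra $\mathfrak h_0$ of $\mathfrak g_0$ contained in $\mathfrak q\cap\mathfrak g_0$. $\mathcal R$ is the root system of $\mathfrak g$ w.r.t. $\mathfrak h=\mathfrak h_0^{\mathbb C}$ (real on $\mathfrak h_{\mathbb R}=(\mathfrak h_0\cap\mathfrak p_0)\oplus i(\mathfrak h_0\cap\mathfrak k_0)$); $\bar\alpha$ is the root with $\mathfrak g^{\bar\alpha}=\overline{\mathfrak g^\alpha}$; $\mathcal R_{\rm re}=\{\bar\alpha=\alpha\}$, $\mathcal R_{\rm im}=\{\bar\alpha=-\alpha\}$, $\mathcal R_{\rm cpx}=\{\bar\alpha\neq\pm\alpha\}$. $\mathcal Q=\{\alpha:\mathfrak g^\alpha\subset\mathfrak q\}$, and $\mathcal Q^n=\{\alpha\in\mathcal Q: -\alpha\notin\mathcal Q\}$ (roots of the nilradical). A Weyl chamber $C$ (with induced order $\prec$ and basis $\mathcal B$ of simple positive roots) is fit for $\mathcal Q$ if every $C$-positive root lies in $\mathcal Q$. *)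

theory Defs
  imports "HOL-Analysis.Analysis"
begin

text \<open>Roots are identified with vectors of the Euclidean space h_R (via the Killing form),
the pairing of a root with an element of h_R is the inner product.\<close>

definition root_system :: "'a::euclidean_space set \<Rightarrow> bool" where
  "root_system R \<longleftrightarrow> finite R \<and> 0 \<notin> R \<and> span R = UNIV \<and>
     (\<forall>\<alpha>\<in>R. \<forall>\<beta>\<in>R. (2 * inner \<beta> \<alpha> / inner \<alpha> \<alpha>) \<in> \<int> \<and>
                      \<beta> - (2 * inner \<beta> \<alpha> / inner \<alpha> \<alpha>) *\<^sub>R \<alpha> \<in> R) \<and>
     (\<forall>\<alpha>\<in>R. \<forall>c::real. c *\<^sub>R \<alpha> \<in> R \<longrightarrow> c = 1 \<or> c = -1)"

text \<open>The map alpha to conj-alpha induced by the conjugation of g w.r.t. g_0: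
 a linear, isometric involution permuting the roots.\<close>
definition root_conjugation :: "'a::euclidean_space set \<Rightarrow> ('a \<Rightarrow> 'a) \<Rightarrow> bool" where
  "root_conjugation R \<sigma> \<longleftrightarrow> linear \<sigma> \<and> (\<forall>x. \<sigma> (\<sigma> x) = x) \<and>
     (\<forall>x y. inner (\<sigma> x) (\<sigma> y) = inner x y) \<and> \<sigma> ` R = R"

definition real_roots :: "'a::euclidean_space set \<Rightarrow> ('a \<Rightarrow> 'a) \<Rightarrow> 'a set" where
  "real_roots R \<sigma> = {\<alpha>\<in>R. \<sigma> \<alpha> = \<alpha>}"

definition imag_roots :: "'a::euclidean_space set \<Rightarrow> ('a \<Rightarrow> 'a) \<Rightarrow> 'a set" where
  "imag_roots R \<sigma> = {\<alpha>\<in>R. \<sigma> \<alpha> = - \<alpha>}"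

definition cpx_roots :: "'a::euclidean_space set \<Rightarrow> ('a \<Rightarrow> 'a) \<Rightarrow> 'a set" where
  "cpx_roots R \<sigma> = {\<alpha>\<in>R. \<sigma> \<alpha> \<noteq> \<alpha> \<and> \<sigma> \<alpha> \<noteq> - \<alpha>}"

definition weyl_chamber :: "'a::euclidean_space set \<Rightarrow> 'a set \<Rightarrow> bool" where
  "weyl_chamber R C \<longleftrightarrow> C \<in> components {x. \<forall>\<alpha>\<in>R. inner \<alpha> x \<noteq> 0}"

definition cpos :: "'a::euclidean_space set \<Rightarrow> 'a \<Rightarrow> bool" where
  "cpos C \<alpha> \<longleftrightarrow> (\<forall>x\<in>C. 0 < inner \<alpha> x)"

definition simple_roots :: "'a::euclidean_space set \<Rightarrow> 'a set \<Rightarrow> 'a set" where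
  "simple_roots R C = {\<alpha>\<in>R. cpos C \<alpha> \<and>
      \<not> (\<exists>\<beta>\<in>R. \<exists>\<gamma>\<in>R. cpos C \<beta> \<and> cpos C \<gamma> \<and> \<alpha> = \<beta> + \<gamma>)}"

text \<open>Parabolic set of roots of a parabolic subalgebra q containing h:
 closed under addition (q is a subalgebra) and containing all positive roots
 of some Weyl chamber (q contains a Borel subalgebra).\<close>
definition parabolic_set :: "'a::euclidean_space set \<Rightarrow> 'a set \<Rightarrow> bool" where
  "parabolic_set R Q \<longleftrightarrow> Q \<subseteq> R \<and>
     (\<forall>\<alpha>\<in>Q. \<forall>\<beta>\<in>Q. \<alpha> + \<beta> \<in> R \<longrightarrow> \<alpha> + \<beta> \<in> Q) \<and>
     (\<exists>C. weyl_chamber R C \<and> {\<alpha>\<in>R. cpos C \<alpha>} \<subseteq> Q)"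

definition nilrad_roots :: "'a::euclidean_space set \<Rightarrow> 'a set" where
  "nilrad_roots Q = {\<alpha>\<in>Q. - \<alpha> \<notin> Q}"

definition fit :: "'a::euclidean_space set \<Rightarrow> 'a set \<Rightarrow> 'a set \<Rightarrow> bool" where
  "fit R Q C \<longleftrightarrow> weyl_chamber R C \<and> (\<forall>\<alpha>\<in>R. cpos C \<alpha> \<longrightarrow> \<alpha> \<in> Q)"

definition cond_a where
  "cond_a R \<sigma> Q C \<longleftrightarrow> (\<forall>\<alpha>\<in>cpx_roots R \<sigma>. cpos C \<alpha> \<and> cpos C (- \<sigma> \<alpha>) \<longrightarrow>
      \<alpha> \<in> nilrad_roots Q \<and> - \<sigma> \<alpha> \<in> nilrad_roots Q)"

definition cond_b where
  "cond_b R \<sigma> Q C \<longleftrightarrow> (\<forall>\<alpha>\<in>simple_roots R C -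
      ((nilrad_roots Q \<inter> simple_roots R C) \<union> imag_roots R \<sigma>). cpos C (\<sigma> \<alpha>))"

definition cond_c where
  "cond_c R \<sigma> Q C \<longleftrightarrow> (\<forall>\<alpha>\<in>cpx_roots R \<sigma>. cpos C \<alpha> \<and> cpos C (\<sigma> \<alpha>) \<longrightarrow>
      \<alpha> \<in> nilrad_roots Q \<and> \<sigma> \<alpha> \<in> nilrad_roots Q)"

definition cond_d where
  "cond_d R \<sigma> Q C \<longleftrightarrow> (\<forall>\<alpha>\<in>simple_roots R C -
      ((nilrad_roots Q \<inter> simple_roots R C) \<union> real_roots R \<sigma>). cpos C (- \<sigma> \<alpha>))"

end

theory Submission
  imports Defs
begin

text \<open>The simple roots are linearly independent, so a
vector h can take arbitrary values on them, and induction on the height of positive roots carries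
information from the simple roots to all positive roots. With h equal to 1 exactly on the simple
roots \<beta> with -\<beta> \<notin> Q this gives Q = {\<alpha>. 0 \<le> \<langle>\<alpha>, h\<rangle>}. With h equal to 1 exactly on the
non-imaginary simple roots, condition (b) gives \<langle>\<sigma> \<alpha>, h\<rangle> \<ge> 0 for every positive root \<alpha> with
-\<alpha> \<in> Q, with equality only if \<alpha> is imaginary. If moreover \<sigma> \<alpha> \<prec> 0, then
\<langle>-\<sigma> \<alpha>, h\<rangle> \<ge> 0 forces equality; hence a complex root \<alpha> \<succ> 0 with \<sigma> \<alpha> \<prec> 0 has -\<alpha> \<notin> Q,
which is (b) \<Longrightarrow> (a).

A chamber satisfying (a) is the one through a point that orders the roots lexicographically by
their values on h, \<sigma> h and a generic \<sigma>-invariant vector, where Q = {\<alpha>. 0 \<le> \<langle>\<alpha>, h\<rangle>}: for a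
complex root \<alpha> the value sequences of \<alpha> and \<sigma> \<alpha> begin with the same two numbers in swapped
order and agree in the third, so \<alpha> \<succ> 0 \<succ> \<sigma> \<alpha> forces \<langle>\<alpha>, h\<rangle> > 0 > \<langle>\<sigma> \<alpha>, h\<rangle>.
Replacing \<sigma> by -\<sigma> turns (c) and (d) into (a) and (b).\<close>

section \<open>Root systems and their conjugation\<close>

lemma root_system_finite: "root_system R \<Longrightarrow> finite R"
  by (simp add: root_system_def)

lemma root_system_nonzero: "root_system R \<Longrightarrow> \<alpha> \<in> R \<Longrightarrow> \<alpha> \<noteq> 0"
  by (auto simp: root_system_def)

lemma root_system_uminus:
  assumes "root_system R" "\<alpha> \<in> R"
  shows "- \<alpha> \<in> R"
proof -
  have "\<alpha> - (2 * inner \<alpha> \<alpha> / inner \<alpha> \<alpha>) *\<^sub>R \<alpha> \<in> R"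
    using assms unfolding root_system_def by blast
  moreover have "\<alpha> - (2 * inner \<alpha> \<alpha> / inner \<alpha> \<alpha>) *\<^sub>R \<alpha> = - \<alpha>"
    using root_system_nonzero[OF assms] by (simp add: scaleR_2)
  ultimately show ?thesis by simp
qed

lemma root_system_inner_sq_less:
  assumes rs: "root_system R" and \<alpha>: "\<alpha> \<in> R" and \<beta>: "\<beta> \<in> R"
    and "\<alpha> \<noteq> \<beta>" and pos: "0 < inner \<alpha> \<beta>"
  shows "(inner \<alpha> \<beta>)\<^sup>2 < inner \<alpha> \<alpha> * inner \<beta> \<beta>"
proof -
  have "inner \<alpha> \<beta> \<noteq> norm \<alpha> * norm \<beta>"
  proof
    assume "inner \<alpha> \<beta> = norm \<alpha> * norm \<beta>"
    then have "norm \<alpha> *\<^sub>R \<beta> = norm \<beta> *\<^sub>R \<alpha>"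
      using norm_cauchy_schwarz_eq by blast
    then have \<beta>_eq: "\<beta> = (norm \<beta> / norm \<alpha>) *\<^sub>R \<alpha>"
      using root_system_nonzero[OF rs \<alpha>]
      by (metis divide_inverse_commute norm_eq_zero scaleR_scaleR inverse_eq_divide
          real_vector.scale_left_imp_eq scaleR_one right_inverse)
    then have "(norm \<beta> / norm \<alpha>) *\<^sub>R \<alpha> \<in> R"
      using \<beta> by simp
    then have "norm \<beta> / norm \<alpha> = 1 \<or> norm \<beta> / norm \<alpha> = -1"
      using rs \<alpha> unfolding root_system_def by blast
    moreover have "norm \<beta> / norm \<alpha> > 0"
      using root_system_nonzero[OF rs] \<alpha> \<beta> by simp
    ultimately have "norm \<beta> / norm \<alpha> = 1"
      by linarith
    then show False
      using \<beta>_eq \<open>\<alpha> \<noteq> \<beta>\<close> by (metis scaleR_one)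
  qed
  then have "inner \<alpha> \<beta> < norm \<alpha> * norm \<beta>"
    using norm_cauchy_schwarz[of \<alpha> \<beta>] by simp
  then have "(inner \<alpha> \<beta>)\<^sup>2 < (norm \<alpha> * norm \<beta>)\<^sup>2"
    using pos by (intro power_strict_mono) auto
  then show ?thesis
    by (simp add: power_mult_distrib power2_norm_eq_inner)
qed

lemma Ints_pos_mult_less_4:
  fixes a b :: real
  assumes "a \<in> \<int>" "b \<in> \<int>" "0 < a" "0 < b" "a * b < 4"
  shows "a = 1 \<or> b = 1"
proof -
  obtain k l where kl: "a = of_int k" "b = of_int l"
    using assms(1,2) Ints_cases by metis
  have "real_of_int (k * l) < real_of_int 4"
    using assms(5) kl by simp
  then have "k * l < 4"
    by (simp only: of_int_less_iff)
  moreover have "1 \<le> k" "1 \<le> l"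
    using assms(3,4) kl by simp_all
  ultimately have "k = 1 \<or> l = 1"
    using mult_mono[of 2 k 2 l] by linarith
  then show ?thesis
    using kl by auto
qed

text \<open>The usual argument via the product of the two Cartan integers, which is less than 4.\<close>

lemma root_system_diff:
  assumes rs: "root_system R" and \<alpha>: "\<alpha> \<in> R" and \<beta>: "\<beta> \<in> R"
    and "\<alpha> \<noteq> \<beta>" and pos: "0 < inner \<alpha> \<beta>"
  shows "\<alpha> - \<beta> \<in> R"
proof -
  define m n where "m = 2 * inner \<alpha> \<beta> / inner \<beta> \<beta>" and "n = 2 * inner \<beta> \<alpha> / inner \<alpha> \<alpha>"
  have \<alpha>\<alpha>: "0 < inner \<alpha> \<alpha>" and \<beta>\<beta>: "0 < inner \<beta> \<beta>"
    using root_system_nonzero[OF rs] \<alpha> \<beta> by auto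
  have m: "m \<in> \<int>" "\<alpha> - m *\<^sub>R \<beta> \<in> R" and n: "n \<in> \<int>" "\<beta> - n *\<^sub>R \<alpha> \<in> R"
    using rs \<alpha> \<beta> unfolding m_def n_def root_system_def by blast+
  have "m * n = 4 * (inner \<alpha> \<beta>)\<^sup>2 / (inner \<alpha> \<alpha> * inner \<beta> \<beta>)"
    using \<alpha>\<alpha> \<beta>\<beta> by (simp add: m_def n_def inner_commute power2_eq_square field_simps)
  also have "\<dots> < 4"
    using root_system_inner_sq_less[OF assms] \<alpha>\<alpha> \<beta>\<beta> by (simp add: field_simps)
  finally have "m = 1 \<or> n = 1"
    using Ints_pos_mult_less_4[OF m(1) n(1)] pos \<alpha>\<alpha> \<beta>\<beta>
    by (simp add: m_def n_def inner_commute)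
  then show ?thesis
  proof
    assume "m = 1"
    then show ?thesis using m(2) by simp
  next
    assume "n = 1"
    then have "\<beta> - \<alpha> \<in> R" using n(2) by simp
    then show ?thesis using root_system_uminus[OF rs] by fastforce
  qed
qed

lemma root_conjugation_linear: "root_conjugation R \<sigma> \<Longrightarrow> linear \<sigma>"
  and root_conjugation_involutive: "root_conjugation R \<sigma> \<Longrightarrow> \<sigma> (\<sigma> v) = v"
  and root_conjugation_inner: "root_conjugation R \<sigma> \<Longrightarrow> inner (\<sigma> v) (\<sigma> w) = inner v w"
  and root_conjugation_root: "root_conjugation R \<sigma> \<Longrightarrow> \<alpha> \<in> R \<Longrightarrow> \<sigma> \<alpha> \<in> R"
  by (auto simp: root_conjugation_def)

lemma root_conjugation_inner_swap:
  assumes "root_conjugation R \<sigma>"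
  shows "inner (\<sigma> v) w = inner v (\<sigma> w)"
  using root_conjugation_inner[OF assms, of v "\<sigma> w"] root_conjugation_involutive[OF assms]
  by simp

lemma root_conjugation_uminus:
  assumes rs: "root_system R" and rc: "root_conjugation R \<sigma>"
  shows "root_conjugation R (\<lambda>v. - \<sigma> v)"
proof -
  have "(\<lambda>v. - \<sigma> v) ` R = R"
  proof
    show "(\<lambda>v. - \<sigma> v) ` R \<subseteq> R"
      using root_conjugation_root[OF rc] root_system_uminus[OF rs] by blast
    show "R \<subseteq> (\<lambda>v. - \<sigma> v) ` R"
    proof
      fix \<alpha> assume "\<alpha> \<in> R"
      then have "\<sigma> (- \<alpha>) \<in> R"
        using root_conjugation_root[OF rc] root_system_uminus[OF rs] by blast
      moreover have "\<alpha> = - \<sigma> (\<sigma> (- \<alpha>))"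
        using root_conjugation_involutive[OF rc] by simp
      ultimately show "\<alpha> \<in> (\<lambda>v. - \<sigma> v) ` R" by blast
    qed
  qed
  moreover have "linear (\<lambda>v. - \<sigma> v)"
    using root_conjugation_linear[OF rc] by (simp add: linear_compose_neg)
  ultimately show ?thesis
    using rc linear_neg[OF root_conjugation_linear[OF rc]]
    unfolding root_conjugation_def by simp
qed

lemma cond_c_eq_cond_a_uminus: "cond_c R \<sigma> Q C = cond_a R (\<lambda>v. - \<sigma> v) Q C"
proof -
  have "cpx_roots R (\<lambda>v. - \<sigma> v) = cpx_roots R \<sigma>"
    by (auto simp: cpx_roots_def minus_equation_iff)
  then show ?thesis
    by (simp add: cond_c_def cond_a_def)
qed

lemma cond_d_eq_cond_b_uminus: "cond_d R \<sigma> Q C = cond_b R (\<lambda>v. - \<sigma> v) Q C"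
proof -
  have "imag_roots R (\<lambda>v. - \<sigma> v) = real_roots R \<sigma>"
    by (auto simp: imag_roots_def real_roots_def)
  then show ?thesis
    by (simp add: cond_d_def cond_b_def)
qed

section \<open>Weyl chambers and regular points\<close>

lemma connected_inner_pos_iff:
  assumes "connected C" "x \<in> C" "y \<in> C" "\<forall>z\<in>C. inner a z \<noteq> 0"
  shows "0 < inner a x \<longleftrightarrow> 0 < inner a y"
proof -
  have "\<not> (0 < inner a x \<and> inner a y \<le> 0)"
    using connected_ivt_hyperplane[OF assms(1) assms(3) assms(2), of a 0] assms(4) by force
  moreover have "\<not> (0 < inner a y \<and> inner a x \<le> 0)"
    using connected_ivt_hyperplane[OF assms(1) assms(2) assms(3), of a 0] assms(4) by force
  ultimately show ?thesis
    using assms(2,4) by force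
qed

lemma cpos_component_iff:
  assumes x: "\<forall>\<beta>\<in>R. inner \<beta> x \<noteq> 0" and \<alpha>: "\<alpha> \<in> R"
  shows "cpos (connected_component_set {y. \<forall>\<beta>\<in>R. inner \<beta> y \<noteq> 0} x) \<alpha> \<longleftrightarrow> 0 < inner \<alpha> x"
proof -
  let ?S = "{y. \<forall>\<beta>\<in>R. inner \<beta> y \<noteq> 0}"
  have "x \<in> ?S" using x by simp
  then have "x \<in> connected_component_set ?S x"
    by (simp add: connected_component_refl)
  moreover have "\<forall>y\<in>connected_component_set ?S x. inner \<alpha> y \<noteq> 0"
    using connected_component_subset \<alpha> by blast
  ultimately show ?thesis
    unfolding cpos_def
    using connected_inner_pos_iff[OF connected_connected_component, of x ?S] by blast
qed

lemma weyl_chamber_regular_point: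
  assumes "weyl_chamber R C"
  obtains x where "\<forall>\<alpha>\<in>R. inner \<alpha> x \<noteq> 0" "\<forall>\<alpha>\<in>R. cpos C \<alpha> \<longleftrightarrow> 0 < inner \<alpha> x"
proof -
  obtain x where "\<forall>\<alpha>\<in>R. inner \<alpha> x \<noteq> 0"
    and "C = connected_component_set {y. \<forall>\<beta>\<in>R. inner \<beta> y \<noteq> 0} x"
    using assms by (auto simp: weyl_chamber_def components_iff)
  then show thesis
    using that cpos_component_iff by blast
qed

lemma weyl_chamber_of_regular_point:
  assumes "\<forall>\<alpha>\<in>R. inner \<alpha> x \<noteq> 0"
  obtains C where "weyl_chamber R C" "\<forall>\<alpha>\<in>R. cpos C \<alpha> \<longleftrightarrow> 0 < inner \<alpha> x"
proof
  show "weyl_chamber R (connected_component_set {y. \<forall>\<beta>\<in>R. inner \<beta> y \<noteq> 0} x)"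
    unfolding weyl_chamber_def using assms by (intro componentsI) simp
  show "\<forall>\<alpha>\<in>R. cpos (connected_component_set {y. \<forall>\<beta>\<in>R. inner \<beta> y \<noteq> 0} x) \<alpha> \<longleftrightarrow> 0 < inner \<alpha> x"
    using assms cpos_component_iff by blast
qed

section \<open>Lexicographic orders on the roots\<close>

fun lex_sgn :: "real list \<Rightarrow> real" where
  "lex_sgn [] = 0"
| "lex_sgn (a # as) = (if a = 0 then lex_sgn as else sgn a)"

lemma lex_sgn_eq_0_iff: "lex_sgn as = 0 \<longleftrightarrow> (\<forall>a\<in>set as. a = 0)"
  by (induction as) (auto simp: sgn_0_0)

lemma lex_sgn_pos_imp_nonneg: "0 < lex_sgn (a # as) \<Longrightarrow> 0 \<le> a"
  by (auto split: if_splits)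

lemma lex_sgn_swap:
  assumes "c \<noteq> 0" "0 < lex_sgn (a # b # c # ds)" "lex_sgn (b # a # c # es) < 0"
  shows "0 < a \<and> b < 0"
  using assms by (auto split: if_splits)

lemma eventually_sgn_inner_perturbation:
  fixes h y :: "'a::real_inner"
  shows "eventually (\<lambda>t. sgn (inner a (h + t *\<^sub>R y)) =
           (if inner a h = 0 then sgn (inner a y) else sgn (inner a h))) (at_right 0)"
proof (cases "inner a h = 0")
  case True
  show ?thesis
    using eventually_at_right_less[of 0]
    by (rule eventually_mono) (simp add: True inner_add_right sgn_mult)
next
  case False
  have "((\<lambda>t. inner a h + t * inner a y) \<longlongrightarrow> inner a h + 0 * inner a y) (at_right 0)"
    by (intro tendsto_intros)
  then have lim: "((\<lambda>t. inner a (h + t *\<^sub>R y)) \<longlongrightarrow> inner a h) (at_right 0)"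
    by (simp add: inner_add_right)
  consider "0 < inner a h" | "inner a h < 0"
    using False by linarith
  then show ?thesis
  proof cases
    case 1
    then show ?thesis
      using order_tendstoD(1)[OF lim 1] by (auto elim: eventually_mono)
  next
    case 2
    then show ?thesis
      using order_tendstoD(2)[OF lim 2] by (auto elim: eventually_mono)
  qed
qed

lemma exists_lex_sgn_point:
  fixes vs :: "'a::real_inner list"
  assumes "finite A"
  shows "\<exists>x. \<forall>\<alpha>\<in>A. sgn (inner \<alpha> x) = lex_sgn (map (inner \<alpha>) vs)"
proof (induction vs)
  case Nil
  show ?case by (auto intro: exI[of _ 0])
next
  case (Cons v vs)
  then obtain y where y: "\<forall>\<alpha>\<in>A. sgn (inner \<alpha> y) = lex_sgn (map (inner \<alpha>) vs)"
    by blast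
  have "eventually (\<lambda>t. \<forall>\<alpha>\<in>A. sgn (inner \<alpha> (v + t *\<^sub>R y)) =
          (if inner \<alpha> v = 0 then sgn (inner \<alpha> y) else sgn (inner \<alpha> v))) (at_right 0)"
    using assms by (intro eventually_ball_finite ballI eventually_sgn_inner_perturbation)
  then obtain t where "\<forall>\<alpha>\<in>A. sgn (inner \<alpha> (v + t *\<^sub>R y)) =
          (if inner \<alpha> v = 0 then sgn (inner \<alpha> y) else sgn (inner \<alpha> v))"
    using eventually_happens' trivial_limit_at_right_real by blast
  then show ?case
    using y by (auto intro!: exI[of _ "v + t *\<^sub>R y"])
qed

lemma exists_inner_nonzero:
  fixes F :: "'a::euclidean_space set"
  assumes "finite F" "0 \<notin> F"
  obtains w where "\<forall>v\<in>F. inner v w \<noteq> 0"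
proof -
  have "negligible (\<Union>v\<in>F. {w. inner v w = 0})"
    using assms by (intro negligible_Union) (auto intro!: negligible_hyperplane)
  then have "(\<Union>v\<in>F. {w. inner v w = 0}) \<noteq> UNIV"
    by auto
  then show thesis
    using that by blast
qed

lemma exists_regular_point_conj_order:
  assumes rs: "root_system R" and rc: "root_conjugation R \<sigma>"
  obtains x where "\<forall>\<alpha>\<in>R. inner \<alpha> x \<noteq> 0"
    and "\<forall>\<alpha>\<in>R. 0 < inner \<alpha> x \<longrightarrow> 0 \<le> inner \<alpha> h"
    and "\<forall>\<alpha>\<in>cpx_roots R \<sigma>. 0 < inner \<alpha> x \<longrightarrow> inner (\<sigma> \<alpha>) x < 0 \<longrightarrow>
           0 < inner \<alpha> h \<and> inner (\<sigma> \<alpha>) h < 0"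
proof -
  have fin: "finite ((R \<union> (\<lambda>\<alpha>. \<alpha> + \<sigma> \<alpha>) ` R) - {0})"
    using root_system_finite[OF rs] by simp
  obtain w where w: "\<forall>v\<in>(R \<union> (\<lambda>\<alpha>. \<alpha> + \<sigma> \<alpha>) ` R) - {0}. inner v w \<noteq> 0"
    by (rule exists_inner_nonzero[OF fin]) auto
  define u where "u = w + \<sigma> w"
  have u: "inner \<alpha> u = inner (\<alpha> + \<sigma> \<alpha>) w" for \<alpha>
    by (simp add: u_def inner_add_right inner_add_left root_conjugation_inner_swap[OF rc])
  have u_conj: "inner (\<sigma> \<alpha>) u = inner \<alpha> u" for \<alpha>
    by (simp add: u add.commute root_conjugation_involutive[OF rc])
  obtain x where x: "\<forall>\<alpha>\<in>R. sgn (inner \<alpha> x) = lex_sgn [inner \<alpha> h, inner \<alpha> (\<sigma> h), inner \<alpha> u, inner \<alpha> w]"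
    using exists_lex_sgn_point[OF root_system_finite[OF rs], of "[h, \<sigma> h, u, w]"]
    by (auto simp del: lex_sgn.simps)
  show thesis
  proof (rule that; intro ballI impI)
    fix \<alpha> assume "\<alpha> \<in> R"
    then have "inner \<alpha> w \<noteq> 0"
      using w root_system_nonzero[OF rs] by blast
    then have "lex_sgn [inner \<alpha> h, inner \<alpha> (\<sigma> h), inner \<alpha> u, inner \<alpha> w] \<noteq> 0"
      unfolding lex_sgn_eq_0_iff by simp
    then show "inner \<alpha> x \<noteq> 0"
      using x \<open>\<alpha> \<in> R\<close> by fastforce
  next
    fix \<alpha> assume "\<alpha> \<in> R" "0 < inner \<alpha> x"
    then show "0 \<le> inner \<alpha> h"
      using x lex_sgn_pos_imp_nonneg by (metis sgn_greater)
  next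
    fix \<alpha> assume \<alpha>: "\<alpha> \<in> cpx_roots R \<sigma>" and "0 < inner \<alpha> x" "inner (\<sigma> \<alpha>) x < 0"
    then have "\<alpha> \<in> R" "\<sigma> \<alpha> \<in> R" "\<alpha> + \<sigma> \<alpha> \<noteq> 0"
      using root_conjugation_root[OF rc] by (auto simp: cpx_roots_def add_eq_0_iff)
    then have "\<alpha> + \<sigma> \<alpha> \<in> (R \<union> (\<lambda>\<alpha>. \<alpha> + \<sigma> \<alpha>) ` R) - {0}"
      by blast
    then have "inner \<alpha> u \<noteq> 0"
      using w by (simp only: u) blast
    moreover have "0 < lex_sgn [inner \<alpha> h, inner \<alpha> (\<sigma> h), inner \<alpha> u, inner \<alpha> w]"
      using x \<open>\<alpha> \<in> R\<close> \<open>0 < inner \<alpha> x\<close> by (metis sgn_greater)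
    moreover have "lex_sgn [inner \<alpha> (\<sigma> h), inner \<alpha> h, inner \<alpha> u, inner (\<sigma> \<alpha>) w] < 0"
      using x \<open>\<sigma> \<alpha> \<in> R\<close> \<open>inner (\<sigma> \<alpha>) x < 0\<close> u_conj
        root_conjugation_inner_swap[OF rc] root_conjugation_inner[OF rc]
      by (metis sgn_less)
    ultimately show "0 < inner \<alpha> h \<and> inner (\<sigma> \<alpha>) h < 0"
      using lex_sgn_swap root_conjugation_inner_swap[OF rc] by metis
  qed
qed

section \<open>Positive systems and simple roots\<close>

locale positive_system =
  fixes R :: "'a::euclidean_space set" and x :: 'a
  assumes root_system: "root_system R"
    and regular: "\<And>\<alpha>. \<alpha> \<in> R \<Longrightarrow> inner \<alpha> x \<noteq> 0"
begin

definition pos :: "'a \<Rightarrow> bool" where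
  "pos \<alpha> \<longleftrightarrow> 0 < inner \<alpha> x"

definition simple :: "'a set" where
  "simple = {\<alpha>\<in>R. pos \<alpha> \<and> \<not> (\<exists>\<beta>\<in>R. \<exists>\<gamma>\<in>R. pos \<beta> \<and> pos \<gamma> \<and> \<alpha> = \<beta> + \<gamma>)}"

lemma pos_or_pos_uminus: "\<alpha> \<in> R \<Longrightarrow> pos \<alpha> \<or> pos (- \<alpha>)"
  using regular[of \<alpha>] by (auto simp: pos_def)

lemma not_pos_uminus: "pos \<alpha> \<Longrightarrow> \<not> pos (- \<alpha>)"
  by (auto simp: pos_def)

lemma simple_root: "\<beta> \<in> simple \<Longrightarrow> \<beta> \<in> R"
  and simple_pos: "\<beta> \<in> simple \<Longrightarrow> pos \<beta>"
  by (auto simp: simple_def)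

lemma finite_simple: "finite simple"
  using root_system_finite[OF root_system] by (auto simp: simple_def)

lemma positive_root_induct [consumes 2, case_names simple add]:
  assumes "\<alpha> \<in> R" "pos \<alpha>"
    and P_simple: "\<And>\<beta>. \<beta> \<in> simple \<Longrightarrow> P \<beta>"
    and P_add: "\<And>\<beta> \<gamma>. \<beta> \<in> R \<Longrightarrow> \<gamma> \<in> R \<Longrightarrow> pos \<beta> \<Longrightarrow> pos \<gamma> \<Longrightarrow> \<beta> + \<gamma> \<in> R \<Longrightarrow>
        P \<beta> \<Longrightarrow> P \<gamma> \<Longrightarrow> P (\<beta> + \<gamma>)"
  shows "P \<alpha>"
  using assms(1,2)
proof (induction "card {\<rho>\<in>R. inner \<rho> x < inner \<alpha> x}" arbitrary: \<alpha> rule: less_induct)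
  case (less \<alpha>)
  show ?case
  proof (cases "\<alpha> \<in> simple")
    case True
    then show ?thesis by (rule P_simple)
  next
    case False
    then obtain \<beta> \<gamma> where \<beta>\<gamma>: "\<beta> \<in> R" "\<gamma> \<in> R" "pos \<beta>" "pos \<gamma>" "\<alpha> = \<beta> + \<gamma>"
      using less.prems by (auto simp: simple_def)
    have fewer_below: "card {\<rho>\<in>R. inner \<rho> x < inner \<delta> x} < card {\<rho>\<in>R. inner \<rho> x < inner \<alpha> x}"
      if "\<delta> \<in> R" "inner \<delta> x < inner \<alpha> x" for \<delta>
    proof (rule psubset_card_mono)
      show "finite {\<rho>\<in>R. inner \<rho> x < inner \<alpha> x}"
        using root_system_finite[OF root_system] by simp
      show "{\<rho>\<in>R. inner \<rho> x < inner \<delta> x} \<subset> {\<rho>\<in>R. inner \<rho> x < inner \<alpha> x}"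
        using that by auto
    qed
    have "inner \<beta> x < inner \<alpha> x" "inner \<gamma> x < inner \<alpha> x"
      using \<beta>\<gamma> by (auto simp: pos_def inner_add_left)
    then have "P \<beta>" "P \<gamma>"
      using less.hyps fewer_below \<beta>\<gamma> by auto
    then show ?thesis
      using P_add \<beta>\<gamma> less.prems by blast
  qed
qed

lemma simple_inner_nonpos:
  assumes \<beta>: "\<beta> \<in> simple" and \<gamma>: "\<gamma> \<in> simple" and "\<beta> \<noteq> \<gamma>"
  shows "inner \<beta> \<gamma> \<le> 0"
proof (rule ccontr)
  assume "\<not> inner \<beta> \<gamma> \<le> 0"
  then have diff: "\<beta> - \<gamma> \<in> R"
    using root_system_diff[OF root_system simple_root[OF \<beta>] simple_root[OF \<gamma>] \<open>\<beta> \<noteq> \<gamma>\<close>] by simp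
  consider "pos (\<beta> - \<gamma>)" | "pos (\<gamma> - \<beta>)"
    using pos_or_pos_uminus[OF diff] by auto
  then show False
  proof cases
    case 1
    then have "\<beta> = (\<beta> - \<gamma>) + \<gamma>" "pos \<gamma>" "\<gamma> \<in> R"
      using simple_pos[OF \<gamma>] simple_root[OF \<gamma>] by simp_all
    then show False
      using \<beta> 1 diff unfolding simple_def by blast
  next
    case 2
    then have "\<gamma> = (\<gamma> - \<beta>) + \<beta>" "pos \<beta>" "\<beta> \<in> R" "\<gamma> - \<beta> \<in> R"
      using simple_pos[OF \<beta>] simple_root[OF \<beta>] root_system_uminus[OF root_system diff] by simp_all
    then show False
      using \<gamma> 2 unfolding simple_def by blast
  qed
qed

lemma simple_nonneg_combination_eq_0:
  assumes S: "S \<subseteq> simple" and nonneg: "\<And>v. v \<in> S \<Longrightarrow> 0 \<le> c v"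
    and "(\<Sum>v\<in>S. c v *\<^sub>R v) = 0" and v: "v \<in> S"
  shows "c v = 0"
proof -
  have pos_x: "0 < inner v x" if "v \<in> S" for v
    using S that simple_pos by (auto simp: pos_def)
  have "(\<Sum>v\<in>S. c v * inner v x) = inner (\<Sum>v\<in>S. c v *\<^sub>R v) x"
    by (simp add: inner_sum_left)
  also have "\<dots> = 0"
    using assms(3) by simp
  finally have sum0: "(\<Sum>v\<in>S. c v * inner v x) = 0" .
  have "c v * inner v x = 0"
  proof (rule sum_nonneg_0[OF _ _ sum0 v])
    show "finite S"
      using S finite_simple by (rule finite_subset)
    show "0 \<le> c v * inner v x" if "v \<in> S" for v
      using nonneg[OF that] pos_x[OF that] by simp
  qed
  then show ?thesis
    using pos_x[OF v] by simp
qed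

text \<open>Split the coefficients into positive and negative parts p and n: the vector
\<Sum> p v v = \<Sum> n v v has nonpositive square because distinct simple roots are obtuse.\<close>

lemma independent_simple: "independent simple"
proof (rule independent_if_scalars_zero[OF finite_simple])
  fix c :: "'a \<Rightarrow> real" and w
  assume sum0: "(\<Sum>v\<in>simple. c v *\<^sub>R v) = 0" and w: "w \<in> simple"
  define p n where "p v = max (c v) 0" and "n v = max (- c v) 0" for v
  have c: "c v = p v - n v" for v
    by (simp add: p_def n_def max_def)
  define a where "a = (\<Sum>v\<in>simple. p v *\<^sub>R v)"
  have a_n: "a = (\<Sum>v\<in>simple. n v *\<^sub>R v)"
    using sum0 by (simp add: a_def c scaleR_diff_left sum_subtractf)
  have "inner a a = inner a (\<Sum>u\<in>simple. n u *\<^sub>R u)"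
    by (simp only: a_n[symmetric])
  also have "\<dots> = (\<Sum>u\<in>simple. \<Sum>v\<in>simple. n u * (p v * inner v u))"
    by (simp add: a_def inner_sum_left inner_sum_right sum_distrib_left)
  also have "\<dots> \<le> 0"
  proof (intro sum_nonpos)
    fix u v assume "u \<in> simple" "v \<in> simple"
    show "n u * (p v * inner v u) \<le> 0"
    proof (cases "v = u")
      case True
      then have "n u * p v = 0"
        by (simp add: p_def n_def max_def)
      then show ?thesis
        by (simp only: mult.assoc[symmetric])
    next
      case False
      then have "p v * inner v u \<le> 0"
        using simple_inner_nonpos \<open>u \<in> simple\<close> \<open>v \<in> simple\<close>
        by (intro mult_nonneg_nonpos) (auto simp: p_def)
      then show ?thesis
        by (intro mult_nonneg_nonpos[of "n u"]) (simp_all add: n_def)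
    qed
  qed
  finally have "a = 0"
    by (metis inner_gt_zero_iff not_le)
  then have "p w = 0" "n w = 0"
    using simple_nonneg_combination_eq_0[of simple p w] simple_nonneg_combination_eq_0[of simple n w]
      w a_n by (auto simp: a_def p_def n_def)
  then show "c w = 0"
    by (simp add: c)
qed

lemma exists_inner_on_simple:
  fixes f :: "'a \<Rightarrow> real"
  obtains h where "\<And>\<beta>. \<beta> \<in> simple \<Longrightarrow> inner \<beta> h = f \<beta>"
proof -
  obtain g :: "'a \<Rightarrow> real" where "linear g" "\<forall>\<beta>\<in>simple. g \<beta> = f \<beta>"
    using linear_independent_extend[OF independent_simple] by blast
  then show thesis
    using that[of "adjoint g 1"] by (simp add: adjoint_works)
qed

lemma positive_root_inner:
  assumes nonneg: "\<And>\<beta>. \<beta> \<in> simple \<Longrightarrow> 0 \<le> inner \<beta> h"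
    and zero: "\<And>\<beta>. \<beta> \<in> simple \<Longrightarrow> inner \<beta> h = 0 \<Longrightarrow> P \<beta>"
    and P_add: "\<And>\<beta> \<gamma>. \<beta> \<in> R \<Longrightarrow> \<gamma> \<in> R \<Longrightarrow> \<beta> + \<gamma> \<in> R \<Longrightarrow> P \<beta> \<Longrightarrow> P \<gamma> \<Longrightarrow> P (\<beta> + \<gamma>)"
    and "\<alpha> \<in> R" "pos \<alpha>"
  shows "0 \<le> inner \<alpha> h \<and> (inner \<alpha> h = 0 \<longrightarrow> P \<alpha>)"
  using \<open>\<alpha> \<in> R\<close> \<open>pos \<alpha>\<close>
proof (induction rule: positive_root_induct)
  case (simple \<beta>)
  then show ?case using nonneg zero by auto
next
  case (add \<beta> \<gamma>)
  show ?case
  proof (intro conjI impI)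
    show "0 \<le> inner (\<beta> + \<gamma>) h"
      using add by (simp add: inner_add_left)
    assume "inner (\<beta> + \<gamma>) h = 0"
    then have "inner \<beta> h = 0" "inner \<gamma> h = 0"
      using add by (auto simp: inner_add_left)
    then show "P (\<beta> + \<gamma>)"
      using add P_add by blast
  qed
qed

end

section \<open>Parabolic sets of roots\<close>

locale parabolic_positive_system = positive_system +
  fixes Q :: "'a set"
  assumes Q_closed: "\<And>\<alpha> \<beta>. \<alpha> \<in> Q \<Longrightarrow> \<beta> \<in> Q \<Longrightarrow> \<alpha> + \<beta> \<in> R \<Longrightarrow> \<alpha> + \<beta> \<in> Q"
    and pos_in_Q: "\<And>\<alpha>. \<alpha> \<in> R \<Longrightarrow> pos \<alpha> \<Longrightarrow> \<alpha> \<in> Q"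
begin

lemma uminus_summand_in_Q:
  assumes "- (\<beta> + \<gamma>) \<in> Q" "\<beta> \<in> R" "\<gamma> \<in> R" "pos \<gamma>"
  shows "- \<beta> \<in> Q"
proof -
  have "- (\<beta> + \<gamma>) + \<gamma> = - \<beta>"
    by simp
  then show ?thesis
    using Q_closed[OF assms(1) pos_in_Q[OF assms(3,4)]] root_system_uminus[OF root_system assms(2)]
    by simp
qed

lemma levi_root_induct [consumes 3, case_names simple add]:
  assumes "\<alpha> \<in> R" "pos \<alpha>" "- \<alpha> \<in> Q"
    and P_simple: "\<And>\<beta>. \<beta> \<in> simple \<Longrightarrow> - \<beta> \<in> Q \<Longrightarrow> P \<beta>"
    and P_add: "\<And>\<beta> \<gamma>. \<beta> \<in> R \<Longrightarrow> \<gamma> \<in> R \<Longrightarrow> pos \<beta> \<Longrightarrow> pos \<gamma> \<Longrightarrow> - \<beta> \<in> Q \<Longrightarrow> - \<gamma> \<in> Q \<Longrightarrow>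
        P \<beta> \<Longrightarrow> P \<gamma> \<Longrightarrow> P (\<beta> + \<gamma>)"
  shows "P \<alpha>"
proof -
  have "- \<alpha> \<in> Q \<longrightarrow> P \<alpha>"
    using \<open>\<alpha> \<in> R\<close> \<open>pos \<alpha>\<close>
  proof (induction rule: positive_root_induct)
    case (simple \<beta>)
    then show ?case using P_simple by blast
  next
    case (add \<beta> \<gamma>)
    show ?case
    proof
      assume "- (\<beta> + \<gamma>) \<in> Q"
      moreover have "- (\<gamma> + \<beta>) \<in> Q"
        using calculation by (simp add: add.commute)
      ultimately have "- \<beta> \<in> Q" "- \<gamma> \<in> Q"
        using uminus_summand_in_Q add by blast+
      then show "P (\<beta> + \<gamma>)"
        using P_add add by blast
    qed
  qed
  then show ?thesis
    using \<open>- \<alpha> \<in> Q\<close> by blast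
qed

lemma parabolic_halfspace:
  obtains h where "\<And>\<alpha>. \<alpha> \<in> R \<Longrightarrow> \<alpha> \<in> Q \<longleftrightarrow> 0 \<le> inner \<alpha> h"
proof -
  obtain h where h: "\<And>\<beta>. \<beta> \<in> simple \<Longrightarrow> inner \<beta> h = (if - \<beta> \<in> Q then 0 else 1)"
    using exists_inner_on_simple[of "\<lambda>\<beta>. if - \<beta> \<in> Q then 0 else 1"] by blast
  have nonneg: "0 \<le> inner \<alpha> h \<and> (inner \<alpha> h = 0 \<longrightarrow> - \<alpha> \<in> Q)" if "\<alpha> \<in> R" "pos \<alpha>" for \<alpha>
  proof (rule positive_root_inner[where P = "\<lambda>\<alpha>. - \<alpha> \<in> Q", OF _ _ _ that])
    show "0 \<le> inner \<beta> h" if "\<beta> \<in> simple" for \<beta>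
      using h[OF that] by simp
    show "- \<beta> \<in> Q" if "\<beta> \<in> simple" "inner \<beta> h = 0" for \<beta>
      using h[OF that(1)] that(2) by (auto split: if_splits)
    show "- (\<beta> + \<gamma>) \<in> Q" if "\<beta> + \<gamma> \<in> R" "- \<beta> \<in> Q" "- \<gamma> \<in> Q" for \<beta> \<gamma>
      using Q_closed[OF that(2,3)] root_system_uminus[OF root_system that(1)] by simp
  qed
  have levi_zero: "inner \<alpha> h = 0" if "\<alpha> \<in> R" "pos \<alpha>" "- \<alpha> \<in> Q" for \<alpha>
    using that
  proof (induction rule: levi_root_induct)
    case (simple \<beta>)
    then show ?case using h by simp
  next
    case (add \<beta> \<gamma>)
    then show ?case by (simp add: inner_add_left)
  qed
  show thesis
  proof (rule that)
    fix \<alpha> assume \<alpha>: "\<alpha> \<in> R"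
    show "\<alpha> \<in> Q \<longleftrightarrow> 0 \<le> inner \<alpha> h"
    proof (cases "pos \<alpha>")
      case True
      then show ?thesis using pos_in_Q nonneg \<alpha> by blast
    next
      case False
      then have "pos (- \<alpha>)" "- \<alpha> \<in> R"
        using pos_or_pos_uminus root_system_uminus[OF root_system] \<alpha> by auto
      then show ?thesis
        using nonneg[of "- \<alpha>"] levi_zero[of "- \<alpha>"] by (auto simp: inner_minus_left)
    qed
  qed
qed

lemma exists_inner_detecting_imaginary:
  assumes rc: "root_conjugation R \<sigma>"
  obtains h where "\<And>\<beta>. \<beta> \<in> simple \<Longrightarrow> \<sigma> \<beta> = - \<beta> \<Longrightarrow> inner \<beta> h = 0"
    and "\<And>\<beta>. \<beta> \<in> R \<Longrightarrow> pos \<beta> \<Longrightarrow> 0 \<le> inner \<beta> h \<and> (inner \<beta> h = 0 \<longrightarrow> \<sigma> \<beta> = - \<beta>)"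
proof -
  obtain h where h: "\<And>\<beta>. \<beta> \<in> simple \<Longrightarrow> inner \<beta> h = (if \<sigma> \<beta> = - \<beta> then 0 else 1)"
    using exists_inner_on_simple[of "\<lambda>\<beta>. if \<sigma> \<beta> = - \<beta> then 0 else 1"] by blast
  have positive: "0 \<le> inner \<beta> h \<and> (inner \<beta> h = 0 \<longrightarrow> \<sigma> \<beta> = - \<beta>)" if "\<beta> \<in> R" "pos \<beta>" for \<beta>
  proof (rule positive_root_inner[where P = "\<lambda>\<beta>. \<sigma> \<beta> = - \<beta>", OF _ _ _ that])
    show "0 \<le> inner \<beta> h" if "\<beta> \<in> simple" for \<beta>
      using h[OF that] by simp
    show "\<sigma> \<beta> = - \<beta>" if "\<beta> \<in> simple" "inner \<beta> h = 0" for \<beta>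
      using h[OF that(1)] that(2) by (auto split: if_splits)
    show "\<sigma> (\<beta> + \<gamma>) = - (\<beta> + \<gamma>)" if "\<sigma> \<beta> = - \<beta>" "\<sigma> \<gamma> = - \<gamma>" for \<beta> \<gamma>
      using that linear_add[OF root_conjugation_linear[OF rc]] by simp
  qed
  show thesis
    by (rule that[OF _ positive]) (simp add: h)
qed

text \<open>The conjugate of a positive root of the Levi factor is the sum of the conjugates of its simple
summands, each of which is either imaginary or a positive root on which h is positive.\<close>

lemma uminus_notin_Q_if_conj_neg:
  assumes rc: "root_conjugation R \<sigma>"
    and simple_conj: "\<And>\<beta>. \<beta> \<in> simple \<Longrightarrow> - \<beta> \<in> Q \<Longrightarrow> \<sigma> \<beta> \<noteq> - \<beta> \<Longrightarrow> pos (\<sigma> \<beta>)"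
    and \<alpha>: "\<alpha> \<in> R" "pos \<alpha>" "pos (- \<sigma> \<alpha>)" "\<sigma> \<alpha> \<noteq> - \<alpha>"
  shows "- \<alpha> \<notin> Q"
proof
  assume "- \<alpha> \<in> Q"
  have \<sigma>_add: "\<sigma> (\<beta> + \<gamma>) = \<sigma> \<beta> + \<sigma> \<gamma>" for \<beta> \<gamma>
    by (rule linear_add[OF root_conjugation_linear[OF rc]])
  obtain h where h_simple: "\<And>\<beta>. \<beta> \<in> simple \<Longrightarrow> \<sigma> \<beta> = - \<beta> \<Longrightarrow> inner \<beta> h = 0"
    and imag: "\<And>\<beta>. \<beta> \<in> R \<Longrightarrow> pos \<beta> \<Longrightarrow> 0 \<le> inner \<beta> h \<and> (inner \<beta> h = 0 \<longrightarrow> \<sigma> \<beta> = - \<beta>)"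
    using exists_inner_detecting_imaginary[OF rc] by blast
  have conj: "0 \<le> inner (\<sigma> \<beta>) h \<and> (inner (\<sigma> \<beta>) h = 0 \<longrightarrow> \<sigma> \<beta> = - \<beta>)"
    if "\<beta> \<in> R" "pos \<beta>" "- \<beta> \<in> Q" for \<beta>
    using that
  proof (induction rule: levi_root_induct)
    case (simple \<beta>)
    show ?case
    proof (cases "\<sigma> \<beta> = - \<beta>")
      case True
      then show ?thesis using h_simple[OF simple(1)] by (simp add: inner_minus_left)
    next
      case False
      then have "pos (\<sigma> \<beta>)" "\<sigma> (\<sigma> \<beta>) \<noteq> - \<sigma> \<beta>"
        using simple simple_conj root_conjugation_involutive[OF rc] by (blast, metis minus_minus)
      then show ?thesis
        using imag[of "\<sigma> \<beta>"] root_conjugation_root[OF rc simple_root[OF simple(1)]] by auto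
    qed
  next
    case (add \<beta> \<gamma>)
    show ?case
    proof (intro conjI impI)
      show "0 \<le> inner (\<sigma> (\<beta> + \<gamma>)) h"
        using add by (simp add: \<sigma>_add inner_add_left)
      assume "inner (\<sigma> (\<beta> + \<gamma>)) h = 0"
      then have "inner (\<sigma> \<beta>) h = 0" "inner (\<sigma> \<gamma>) h = 0"
        using add by (auto simp: \<sigma>_add inner_add_left)
      then show "\<sigma> (\<beta> + \<gamma>) = - (\<beta> + \<gamma>)"
        using add by (simp add: \<sigma>_add)
    qed
  qed
  have "0 \<le> inner (- \<sigma> \<alpha>) h"
    using imag[of "- \<sigma> \<alpha>"] \<alpha> root_system_uminus[OF root_system] root_conjugation_root[OF rc] by blast
  then have "inner (\<sigma> \<alpha>) h = 0"
    using conj[OF \<alpha>(1,2) \<open>- \<alpha> \<in> Q\<close>] by (simp add: inner_minus_left)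
  then show False
    using conj[OF \<alpha>(1,2) \<open>- \<alpha> \<in> Q\<close>] \<alpha>(4) by simp
qed

lemma simple_roots_eq:
  assumes "\<And>\<alpha>. \<alpha> \<in> R \<Longrightarrow> cpos C \<alpha> \<longleftrightarrow> pos \<alpha>"
  shows "simple_roots R C = simple"
  unfolding simple_roots_def simple_def using assms by blast

lemma cond_a_imp_cond_b:
  assumes C: "\<And>\<alpha>. \<alpha> \<in> R \<Longrightarrow> cpos C \<alpha> \<longleftrightarrow> pos \<alpha>" and rc: "root_conjugation R \<sigma>"
    and a: "cond_a R \<sigma> Q C"
  shows "cond_b R \<sigma> Q C"
proof -
  have conj_pos: "cpos C (\<sigma> \<beta>)" if \<beta>: "\<beta> \<in> simple" "\<beta> \<notin> nilrad_roots Q" "\<sigma> \<beta> \<noteq> - \<beta>" for \<beta>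
  proof (rule ccontr)
    have "\<beta> \<in> R" "pos \<beta>" "\<sigma> \<beta> \<in> R" "- \<sigma> \<beta> \<in> R"
      using \<beta> simple_root simple_pos root_conjugation_root[OF rc] root_system_uminus[OF root_system]
      by auto
    assume "\<not> cpos C (\<sigma> \<beta>)"
    then have "pos (- \<sigma> \<beta>)"
      using C pos_or_pos_uminus \<open>\<sigma> \<beta> \<in> R\<close> by blast
    then have "\<beta> \<in> cpx_roots R \<sigma>"
      using not_pos_uminus \<open>pos \<beta>\<close> \<open>\<beta> \<in> R\<close> \<beta>(3) by (auto simp: cpx_roots_def)
    then show False
      using a C \<open>pos \<beta>\<close> \<open>pos (- \<sigma> \<beta>)\<close> \<open>\<beta> \<in> R\<close> \<open>- \<sigma> \<beta> \<in> R\<close> \<beta>(2)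
      unfolding cond_a_def by blast
  qed
  show ?thesis
    unfolding cond_b_def
  proof (simp only: simple_roots_eq[OF C], intro ballI)
    fix \<beta> assume "\<beta> \<in> simple - (nilrad_roots Q \<inter> simple \<union> imag_roots R \<sigma>)"
    then show "cpos C (\<sigma> \<beta>)"
      using conj_pos simple_root[of \<beta>] by (auto simp: imag_roots_def)
  qed
qed

lemma cond_b_imp_cond_a:
  assumes C: "\<And>\<alpha>. \<alpha> \<in> R \<Longrightarrow> cpos C \<alpha> \<longleftrightarrow> pos \<alpha>" and rc: "root_conjugation R \<sigma>"
    and b: "cond_b R \<sigma> Q C"
  shows "cond_a R \<sigma> Q C"
proof -
  have simple_conj: "pos (\<sigma> \<beta>)" if "\<beta> \<in> simple" "- \<beta> \<in> Q" "\<sigma> \<beta> \<noteq> - \<beta>" for \<beta>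
  proof -
    have "\<beta> \<in> simple - (nilrad_roots Q \<inter> simple \<union> imag_roots R \<sigma>)"
      using that by (auto simp: nilrad_roots_def imag_roots_def)
    moreover have "\<forall>\<beta>\<in>simple - (nilrad_roots Q \<inter> simple \<union> imag_roots R \<sigma>). cpos C (\<sigma> \<beta>)"
      using b by (simp only: cond_b_def simple_roots_eq[OF C])
    ultimately have "cpos C (\<sigma> \<beta>)"
      by blast
    then show ?thesis
      using C root_conjugation_root[OF rc simple_root[OF that(1)]] by blast
  qed
  have nilrad: "\<alpha> \<in> nilrad_roots Q" if "\<alpha> \<in> R" "pos \<alpha>" "pos (- \<sigma> \<alpha>)" "\<sigma> \<alpha> \<noteq> - \<alpha>" for \<alpha>
    using uminus_notin_Q_if_conj_neg[OF rc simple_conj that] pos_in_Q that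
    by (simp add: nilrad_roots_def)
  show ?thesis
    unfolding cond_a_def
  proof (intro ballI impI)
    fix \<alpha> assume "\<alpha> \<in> cpx_roots R \<sigma>" and "cpos C \<alpha> \<and> cpos C (- \<sigma> \<alpha>)"
    moreover have "\<sigma> (- \<sigma> \<alpha>) = - \<alpha>"
      using linear_neg[OF root_conjugation_linear[OF rc]] root_conjugation_involutive[OF rc] by simp
    ultimately show "\<alpha> \<in> nilrad_roots Q \<and> - \<sigma> \<alpha> \<in> nilrad_roots Q"
      using nilrad[of \<alpha>] nilrad[of "- \<sigma> \<alpha>"] C root_conjugation_root[OF rc]
        root_system_uminus[OF root_system]
      by (auto simp: cpx_roots_def minus_equation_iff)
  qed
qed

end

section \<open>The conditions (a)--(d)\<close>

lemma cond_a_iff_cond_b: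
  assumes rs: "root_system R" and rc: "root_conjugation R \<sigma>" and Q: "parabolic_set R Q"
    and fit: "fit R Q C"
  shows "cond_a R \<sigma> Q C \<longleftrightarrow> cond_b R \<sigma> Q C"
proof -
  obtain x where x: "\<forall>\<alpha>\<in>R. inner \<alpha> x \<noteq> 0" "\<forall>\<alpha>\<in>R. cpos C \<alpha> \<longleftrightarrow> 0 < inner \<alpha> x"
    using weyl_chamber_regular_point fit unfolding fit_def by blast
  interpret positive_system R x
    using rs x by unfold_locales auto
  interpret parabolic_positive_system R x Q
    using Q fit x by unfold_locales (auto simp: parabolic_set_def fit_def pos_def)
  have "\<And>\<alpha>. \<alpha> \<in> R \<Longrightarrow> cpos C \<alpha> \<longleftrightarrow> pos \<alpha>"
    using x by (simp add: pos_def)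
  then show ?thesis
    using cond_a_imp_cond_b cond_b_imp_cond_a rc by blast
qed

lemma exists_fit_cond_a:
  assumes rs: "root_system R" and rc: "root_conjugation R \<sigma>" and Q: "parabolic_set R Q"
  obtains C where "fit R Q C" "cond_a R \<sigma> Q C"
proof -
  obtain C0 where C0: "weyl_chamber R C0" "{\<alpha>\<in>R. cpos C0 \<alpha>} \<subseteq> Q"
    using Q by (auto simp: parabolic_set_def)
  obtain x0 where x0: "\<forall>\<alpha>\<in>R. inner \<alpha> x0 \<noteq> 0" "\<forall>\<alpha>\<in>R. cpos C0 \<alpha> \<longleftrightarrow> 0 < inner \<alpha> x0"
    using weyl_chamber_regular_point[OF C0(1)] by blast
  interpret positive_system R x0
    using rs x0 by unfold_locales auto
  interpret parabolic_positive_system R x0 Q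
    using Q C0 x0 by unfold_locales (auto simp: parabolic_set_def pos_def)
  obtain h where h: "\<And>\<alpha>. \<alpha> \<in> R \<Longrightarrow> \<alpha> \<in> Q \<longleftrightarrow> 0 \<le> inner \<alpha> h"
    using parabolic_halfspace by blast
  obtain x where x: "\<forall>\<alpha>\<in>R. inner \<alpha> x \<noteq> 0" "\<forall>\<alpha>\<in>R. 0 < inner \<alpha> x \<longrightarrow> 0 \<le> inner \<alpha> h"
    "\<forall>\<alpha>\<in>cpx_roots R \<sigma>. 0 < inner \<alpha> x \<longrightarrow> inner (\<sigma> \<alpha>) x < 0 \<longrightarrow>
       0 < inner \<alpha> h \<and> inner (\<sigma> \<alpha>) h < 0"
    using exists_regular_point_conj_order[OF rs rc] by blast
  obtain C where C: "weyl_chamber R C" "\<forall>\<alpha>\<in>R. cpos C \<alpha> \<longleftrightarrow> 0 < inner \<alpha> x"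
    using weyl_chamber_of_regular_point[OF x(1)] by blast
  have "fit R Q C"
    using C x(2) h by (auto simp: fit_def)
  moreover have "cond_a R \<sigma> Q C"
    unfolding cond_a_def
  proof (intro ballI impI)
    fix \<alpha> assume \<alpha>: "\<alpha> \<in> cpx_roots R \<sigma>" "cpos C \<alpha> \<and> cpos C (- \<sigma> \<alpha>)"
    then have "\<alpha> \<in> R" "\<sigma> \<alpha> \<in> R" "- \<alpha> \<in> R" "- \<sigma> \<alpha> \<in> R"
      using root_conjugation_root[OF rc] root_system_uminus[OF rs] by (auto simp: cpx_roots_def)
    then have "0 < inner \<alpha> h \<and> inner (\<sigma> \<alpha>) h < 0"
      using x(3) \<alpha> C by (auto simp: inner_minus_left)
    then show "\<alpha> \<in> nilrad_roots Q \<and> - \<sigma> \<alpha> \<in> nilrad_roots Q"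
      using h \<open>\<alpha> \<in> R\<close> \<open>\<sigma> \<alpha> \<in> R\<close> \<open>- \<alpha> \<in> R\<close> \<open>- \<sigma> \<alpha> \<in> R\<close>
      by (auto simp: nilrad_roots_def inner_minus_left)
  qed
  ultimately show thesis
    using that by blast
qed

theorem lemma4p3:
  fixes R Q :: "'a::euclidean_space set" and \<sigma> :: "'a \<Rightarrow> 'a"
  assumes "root_system R" and "root_conjugation R \<sigma>" and "parabolic_set R Q"
  shows "(\<forall>C. fit R Q C \<longrightarrow> (cond_a R \<sigma> Q C \<longleftrightarrow> cond_b R \<sigma> Q C)) \<and>
         (\<forall>C. fit R Q C \<longrightarrow> (cond_c R \<sigma> Q C \<longleftrightarrow> cond_d R \<sigma> Q C)) \<and>
         (\<exists>C'. fit R Q C' \<and> cond_a R \<sigma> Q C' \<and> cond_b R \<sigma> Q C') \<and>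
         (\<exists>C''. fit R Q C'' \<and> cond_c R \<sigma> Q C'' \<and> cond_d R \<sigma> Q C'')"
proof -
  have neg: "root_conjugation R (\<lambda>v. - \<sigma> v)"
    using root_conjugation_uminus assms(1,2) .
  have ab: "\<forall>C. fit R Q C \<longrightarrow> (cond_a R \<sigma> Q C \<longleftrightarrow> cond_b R \<sigma> Q C)"
    using cond_a_iff_cond_b assms by blast
  have cd: "\<forall>C. fit R Q C \<longrightarrow> (cond_c R \<sigma> Q C \<longleftrightarrow> cond_d R \<sigma> Q C)"
    using cond_a_iff_cond_b[OF assms(1) neg assms(3)]
    by (simp add: cond_c_eq_cond_a_uminus cond_d_eq_cond_b_uminus)
  obtain C' where "fit R Q C'" "cond_a R \<sigma> Q C'"
    using exists_fit_cond_a assms by blast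
  moreover obtain C'' where "fit R Q C''" "cond_c R \<sigma> Q C''"
    using exists_fit_cond_a[OF assms(1) neg assms(3)] by (metis cond_c_eq_cond_a_uminus)
  ultimately show ?thesis
    using ab cd by blast
qed

end
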